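(* Let $\rho\in C_1(\widetilde\Gamma,\widetilde H;\mathbb{Q})$ be a non-geometric Nielsen 1-chain for $f$ relative to $H$. There is a constant $B\ge1$ such that for all pairwise distinct $g_1,\dots,g_r\in\mathbb{F}$, all $q_1,\dots,q_r\in\mathbb{Q}$, $x=q_1g_1\rho+\cdots+q_rg_r\rho$, and all $k\ge0$, $$\sum_{j=1}^rq_j^2\le\|A_{f,H}^k(x)\|^2\le B\sum_{j=1}^rq_j^2.$$
   Context: Setup: $\mathbb{F}$ finitely generated free, $\Gamma$ a finite connected graph with $\pi_1(\Gamma)\cong\mathbb{F}$, $f$ a homotopy equivalence, cellular and edge-linear, $H\subset\Gamma$ a subgraph with $f(H)\subseteq H$, $\widetilde\Gamma$ the universal cover with deck action of $\mathbb{F}$, $\widetilde H$ the preimage of $H$, $\tilde f$ a fixed lift with $\tilde f(gz)=\Phi_f(g)\tilde f(z)$. $C_1(\widetilde\Gamma;\mathbb{Q})$: finitely supported rational 1-chains $x=\sum_ex_ee$; $A_f$ induced by $\tilde f$; $C_1(\widetilde\Gamma,\widetilde H;\mathbb{Q})$ chains vanishing on edges of $\widetilde H$; $\pi_H^\perp$ the projection onto it; $A_{f,H}=\pi_H^\perp\circ A_f|_{C_1(\widetilde\Gamma,\widetilde H;\mathbb Q)}$; $\|x\|^2=\sum_ex_e^2$. $[u,v]$ is the 1-chain of the reduced edge-path from $u$ to $v$ (coefficients $\pm1$ on its edges). A non-geometric Nielsen 1-chain is $\rho=\pi_H^\perp([u,v])$ with $u,v$ vertices fixed by $\tilde f$ such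 that some edge $e\notin\widetilde H$ has $\rho_e=\pm1$ and $\rho_{ge}=0$ for every nontrivial $g\in\mathbb{F}$. (Note $A_{f,H}(g\rho)=\Phi_f(g)\rho$.) *)

theory Defs
  imports Complex_Main "HOL-Algebra.Group"
begin

text \<open>The universal cover is modelled as an oriented graph on vertex type 'v and edge
type 'e with source/target maps src, tgt.  An oriented edge traversal is a pair
(e, b): b = True means e is traversed from src e to tgt e, b = False backwards.\<close>

definition ostart :: "('e \<Rightarrow> 'v) \<Rightarrow> ('e \<Rightarrow> 'v) \<Rightarrow> 'e \<times> bool \<Rightarrow> 'v" where
  "ostart src tgt d = (if snd d then src (fst d) else tgt (fst d))"

definition oend :: "('e \<Rightarrow> 'v) \<Rightarrow> ('e \<Rightarrow> 'v) \<Rightarrow> 'e \<times> bool \<Rightarrow> 'v" where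
  "oend src tgt d = (if snd d then tgt (fst d) else src (fst d))"

fun path_from :: "('e \<Rightarrow> 'v) \<Rightarrow> ('e \<Rightarrow> 'v) \<Rightarrow> 'v \<Rightarrow> ('e \<times> bool) list \<Rightarrow> 'v \<Rightarrow> bool" where
  "path_from src tgt u [] v = (u = v)"
| "path_from src tgt u (d # ds) v = (ostart src tgt d = u \<and> path_from src tgt (oend src tgt d) ds v)"

fun reduced :: "('e \<times> bool) list \<Rightarrow> bool" where
  "reduced (d1 # d2 # ds) = (\<not> (fst d1 = fst d2 \<and> snd d1 \<noteq> snd d2) \<and> reduced (d2 # ds))"
| "reduced _ = True"

definition path_chain :: "('e \<times> bool) list \<Rightarrow> 'e \<Rightarrow> rat" where
  "path_chain ds = (\<lambda>e. \<Sum>d\<leftarrow>ds. if fst d = e then (if snd d then 1 else -1) else 0)"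

definition is_tree :: "('e \<Rightarrow> 'v) \<Rightarrow> ('e \<Rightarrow> 'v) \<Rightarrow> bool" where
  "is_tree src tgt \<longleftrightarrow>
     (\<forall>u v. \<exists>ds. path_from src tgt u ds v) \<and>
     (\<forall>u ds. path_from src tgt u ds u \<and> reduced ds \<longrightarrow> ds = [])"

text \<open>[u,v]: the 1-chain of the reduced edge path from u to v (unique in a tree)\<close>
definition geod_chain :: "('e \<Rightarrow> 'v) \<Rightarrow> ('e \<Rightarrow> 'v) \<Rightarrow> 'v \<Rightarrow> 'v \<Rightarrow> 'e \<Rightarrow> rat" where
  "geod_chain src tgt u v = path_chain (THE ds. path_from src tgt u ds v \<and> reduced ds)"

text \<open>Deck action of F: free, orientation preserving, cocompact (finite quotient graph).\<close>
definition deck_action ::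
  "('g, 'z) monoid_scheme \<Rightarrow> ('g \<Rightarrow> 'v \<Rightarrow> 'v) \<Rightarrow> ('g \<Rightarrow> 'e \<Rightarrow> 'e)
     \<Rightarrow> ('e \<Rightarrow> 'v) \<Rightarrow> ('e \<Rightarrow> 'v) \<Rightarrow> bool" where
  "deck_action G act acte src tgt \<longleftrightarrow>
     group G \<and>
     (\<forall>v. act \<one>\<^bsub>G\<^esub> v = v) \<and> (\<forall>e. acte \<one>\<^bsub>G\<^esub> e = e) \<and>
     (\<forall>g\<in>carrier G. \<forall>h\<in>carrier G. \<forall>v. act (g \<otimes>\<^bsub>G\<^esub> h) v = act g (act h v)) \<and>
     (\<forall>g\<in>carrier G. \<forall>h\<in>carrier G. \<forall>e. acte (g \<otimes>\<^bsub>G\<^esub> h) e = acte g (acte h e)) \<and>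
     (\<forall>g\<in>carrier G. \<forall>e. src (acte g e) = act g (src e) \<and> tgt (acte g e) = act g (tgt e)) \<and>
     (\<forall>g\<in>carrier G. \<forall>v. act g v = v \<longrightarrow> g = \<one>\<^bsub>G\<^esub>) \<and>
     finite (range (\<lambda>v. (\<lambda>g. act g v) ` carrier G)) \<and>
     finite (range (\<lambda>e. (\<lambda>g. acte g e) ` carrier G))"

text \<open>The lift of f: vertex map fv and edge-path images fe; Phi = Phi_f (an automorphism,
f being a homotopy equivalence), with the twisted equivariance.\<close>
definition lifted_map ::
  "('g, 'z) monoid_scheme \<Rightarrow> ('g \<Rightarrow> 'v \<Rightarrow> 'v) \<Rightarrow> ('g \<Rightarrow> 'e \<Rightarrow> 'e)
     \<Rightarrow> ('e \<Rightarrow> 'v) \<Rightarrow> ('e \<Rightarrow> 'v) \<Rightarrow> ('g \<Rightarrow> 'g)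
     \<Rightarrow> ('v \<Rightarrow> 'v) \<Rightarrow> ('e \<Rightarrow> ('e \<times> bool) list) \<Rightarrow> bool" where
  "lifted_map G act acte src tgt Phi fv fe \<longleftrightarrow>
     Phi \<in> iso G G \<and>
     (\<forall>e. path_from src tgt (fv (src e)) (fe e) (fv (tgt e))) \<and>
     (\<forall>g\<in>carrier G. \<forall>v. fv (act g v) = act (Phi g) (fv v)) \<and>
     (\<forall>g\<in>carrier G. \<forall>e. fe (acte g e) = map (\<lambda>d. (acte (Phi g) (fst d), snd d)) (fe e))"

text \<open>H tilde: the (F-invariant) preimage of a subgraph H with f(H) \<subseteq> H.\<close>
definition invariant_subgraph ::
  "('g, 'z) monoid_scheme \<Rightarrow> ('g \<Rightarrow> 'v \<Rightarrow> 'v) \<Rightarrow> ('g \<Rightarrow> 'e \<Rightarrow> 'e)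
     \<Rightarrow> ('e \<Rightarrow> 'v) \<Rightarrow> ('e \<Rightarrow> 'v)
     \<Rightarrow> ('v \<Rightarrow> 'v) \<Rightarrow> ('e \<Rightarrow> ('e \<times> bool) list) \<Rightarrow> 'v set \<Rightarrow> 'e set \<Rightarrow> bool" where
  "invariant_subgraph G act acte src tgt fv fe Hv He \<longleftrightarrow>
     (\<forall>e\<in>He. src e \<in> Hv \<and> tgt e \<in> Hv) \<and>
     (\<forall>g\<in>carrier G. \<forall>v\<in>Hv. act g v \<in> Hv) \<and>
     (\<forall>g\<in>carrier G. \<forall>e\<in>He. acte g e \<in> He) \<and>
     (\<forall>v\<in>Hv. fv v \<in> Hv) \<and>
     (\<forall>e\<in>He. \<forall>d\<in>set (fe e). fst d \<in> He)"

text \<open>Chains are functions 'e \<Rightarrow> rat (finitely supported ones are used).\<close>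
definition chain_supp :: "('e \<Rightarrow> rat) \<Rightarrow> 'e set" where
  "chain_supp x = {e. x e \<noteq> 0}"

definition normsq :: "('e \<Rightarrow> rat) \<Rightarrow> rat" where
  "normsq x = (\<Sum>e\<in>chain_supp x. (x e)^2)"

definition Af :: "('e \<Rightarrow> ('e \<times> bool) list) \<Rightarrow> ('e \<Rightarrow> rat) \<Rightarrow> 'e \<Rightarrow> rat" where
  "Af fe x = (\<lambda>e'. \<Sum>e\<in>chain_supp x. x e * path_chain (fe e) e')"

text \<open>projection onto C_1(tilde Gamma, tilde H)\<close>
definition projH :: "'e set \<Rightarrow> ('e \<Rightarrow> rat) \<Rightarrow> 'e \<Rightarrow> rat" where
  "projH He x = (\<lambda>e. if e \<in> He then 0 else x e)"

definition AfH :: "'e set \<Rightarrow> ('e \<Rightarrow> ('e \<times> bool) list) \<Rightarrow> ('e \<Rightarrow> rat) \<Rightarrow> 'e \<Rightarrow> rat" where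
  "AfH He fe x = projH He (Af fe x)"

definition chain_act ::
  "('g, 'z) monoid_scheme \<Rightarrow> ('g \<Rightarrow> 'e \<Rightarrow> 'e) \<Rightarrow> 'g \<Rightarrow> ('e \<Rightarrow> rat) \<Rightarrow> 'e \<Rightarrow> rat" where
  "chain_act G acte g x = (\<lambda>e. x (acte (inv\<^bsub>G\<^esub> g) e))"

definition nongeometric_nielsen ::
  "('g, 'z) monoid_scheme \<Rightarrow> ('g \<Rightarrow> 'e \<Rightarrow> 'e) \<Rightarrow> ('e \<Rightarrow> 'v) \<Rightarrow> ('e \<Rightarrow> 'v)
     \<Rightarrow> ('v \<Rightarrow> 'v) \<Rightarrow> 'e set \<Rightarrow> ('e \<Rightarrow> rat) \<Rightarrow> bool" where
  "nongeometric_nielsen G acte src tgt fv He rho \<longleftrightarrow>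
     (\<exists>u v. fv u = u \<and> fv v = v \<and> rho = projH He (geod_chain src tgt u v) \<and>
        (\<exists>e. e \<notin> He \<and> (rho e = 1 \<or> rho e = -1) \<and>
             (\<forall>g\<in>carrier G. g \<noteq> \<one>\<^bsub>G\<^esub> \<longrightarrow> rho (acte g e) = 0)))"

end

(* The Nielsen chain rho = pi_H([u,v]) is fixed by A_{f,H}: for fixed vertices u, v the lift
   maps the geodesic chain [u,v] to [f u, f v] = [u,v], and projecting away H commutes with A_f
   because f(H) is contained in H. Twisted equivariance then gives A_{f,H}(g rho) = Phi(g) rho,
   so A_{f,H}^k x = sum q_j Phi^k(g_j) rho is again a combination of pairwise distinct
   translates of rho. For such a combination the value at the translate h_j e of the isolated
   edge e is q_j rho_e = +-q_j, which gives the lower bound sum q_j^2; an edge lies in the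
   support of at most |supp rho| translates, so Cauchy-Schwarz gives the upper bound with
   B = |supp rho| * ||rho||^2. *)

theory Submission
  imports Defs "HOL-Analysis.Convex"
begin

definition opposite :: "'e \<times> bool \<Rightarrow> 'e \<times> bool" where
  "opposite d = (fst d, \<not> snd d)"

definition rev_path :: "('e \<times> bool) list \<Rightarrow> ('e \<times> bool) list" where
  "rev_path ds = rev (map opposite ds)"

lemma opposite_opposite [simp]: "opposite (opposite d) = d"
  by (simp add: opposite_def)

lemma rev_path_Nil [simp]: "rev_path [] = []"
  and rev_path_Cons: "rev_path (d # ds) = rev_path ds @ [opposite d]"
  and rev_path_eq_Nil_iff [simp]: "rev_path ds = [] \<longleftrightarrow> ds = []"
  by (simp_all add: rev_path_def)

lemma reduced_Cons: "reduced (d # ds) \<longleftrightarrow> reduced ds \<and> (ds \<noteq> [] \<longrightarrow> hd ds \<noteq> opposite d)"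
  by (cases ds) (auto simp: opposite_def prod_eq_iff)

lemma reduced_append:
  "reduced (xs @ ys) \<longleftrightarrow>
     reduced xs \<and> reduced ys \<and> (xs \<noteq> [] \<and> ys \<noteq> [] \<longrightarrow> hd ys \<noteq> opposite (last xs))"
  by (induction xs) (auto simp: reduced_Cons)

lemma last_rev_path: "ds \<noteq> [] \<Longrightarrow> last (rev_path ds) = opposite (hd ds)"
  by (cases ds) (simp_all add: rev_path_def)

lemma reduced_rev_path: "reduced ds \<Longrightarrow> reduced (rev_path ds)"
  by (induction ds) (auto simp: reduced_Cons reduced_append rev_path_Cons last_rev_path)

lemma path_from_append:
  "path_from src tgt u (xs @ ys) v \<longleftrightarrow> (\<exists>w. path_from src tgt u xs w \<and> path_from src tgt w ys v)"
  by (induction xs arbitrary: u) auto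

lemma path_from_rev_path: "path_from src tgt u ds v \<Longrightarrow> path_from src tgt v (rev_path ds) u"
  by (induction ds arbitrary: u)
     (auto simp: rev_path_Cons path_from_append ostart_def oend_def opposite_def)

lemma path_chain_Nil [simp]: "path_chain [] e = 0"
  and path_chain_Cons [simp]:
    "path_chain (d # ds) e = (if fst d = e then (if snd d then 1 else -1) else 0) + path_chain ds e"
  and path_chain_append: "path_chain (xs @ ys) e = path_chain xs e + path_chain ys e"
  by (simp_all add: path_chain_def)

lemma path_chain_rev_path: "path_chain (rev_path ds) e = - path_chain ds e"
  by (induction ds) (auto simp: rev_path_Cons path_chain_append opposite_def)

lemma not_reduced_obtain_backtrack:
  assumes "\<not> reduced ds"
  obtains xs d ys where "ds = xs @ d # opposite d # ys"
  using assms
proof (induction ds arbitrary: thesis rule: reduced.induct)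
  case (1 d1 d2 ds)
  show ?case
  proof (cases "d2 = opposite d1")
    case True
    then show ?thesis using "1.prems"(1)[of "[]"] by simp
  next
    case False
    then have "\<not> reduced (d2 # ds)"
      using "1.prems"(2) by (simp add: opposite_def prod_eq_iff)
    then show ?thesis using "1.IH" "1.prems"(1)[of "d1 # _"] by (metis append_Cons)
  qed
qed auto

lemma reduce_path:
  assumes "path_from src tgt u ds v"
  obtains ds' where "path_from src tgt u ds' v" "reduced ds'" "path_chain ds' = path_chain ds"
  using assms
proof (induction "length ds" arbitrary: ds rule: less_induct)
  case less
  show ?case
  proof (cases "reduced ds")
    case False
    then obtain xs d ys where ds: "ds = xs @ d # opposite d # ys"
      by (rule not_reduced_obtain_backtrack)
    have "path_from src tgt u (xs @ ys) v"
      using less.prems(2)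
      by (auto simp: ds path_from_append ostart_def oend_def opposite_def split: if_splits)
    moreover have "path_chain (xs @ ys) = path_chain ds"
      by (auto simp: ds fun_eq_iff path_chain_append opposite_def)
    ultimately show ?thesis
      using less.hyps[of "xs @ ys"] less.prems(1) ds by fastforce
  qed (use less.prems in blast)
qed

lemma reduced_path_unique:
  assumes tree: "is_tree src tgt"
    and "reduced ds1" "reduced ds2" "path_from src tgt u ds1 v" "path_from src tgt u ds2 v"
  shows "ds1 = ds2"
  using assms(2-)
proof (induction "length ds1" arbitrary: ds1 ds2 v rule: less_induct)
  case less
  have closed: "\<And>w ds. path_from src tgt w ds w \<Longrightarrow> reduced ds \<Longrightarrow> ds = []"
    using tree by (auto simp: is_tree_def)
  show ?case
  proof (cases "ds1 = [] \<or> ds2 = []")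
    case True
    then show ?thesis using less.prems closed by (metis path_from.simps(1))
  next
    case False
    then obtain p1 c1 p2 c2 where ds: "ds1 = p1 @ [c1]" "ds2 = p2 @ [c2]"
      by (metis rev_exhaust)
    show ?thesis
    proof (cases "c1 = c2")
      case True
      have "p1 = p2"
        using less.hyps[of p1 p2] less.prems
        by (auto simp: ds True reduced_append path_from_append)
      then show ?thesis using ds True by simp
    next
      case False
      \<comment> \<open>distinct last edges: ds1 followed by ds2 backwards is a nonempty reduced loop at u\<close>
      have "reduced (ds1 @ rev_path ds2)"
        using less.prems(1,2) reduced_rev_path[of ds2] False
        by (auto simp: reduced_append ds rev_path_def opposite_def prod_eq_iff)
      moreover have "path_from src tgt u (ds1 @ rev_path ds2) u"
        using less.prems(3,4) path_from_rev_path path_from_append by metis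
      ultimately show ?thesis using closed ds by blast
    qed
  qed
qed

lemma geod_chain_eq_path_chain:
  assumes tree: "is_tree src tgt" and "path_from src tgt u ds v"
  shows "geod_chain src tgt u v = path_chain ds"
proof -
  obtain ds' where ds': "path_from src tgt u ds' v" "reduced ds'" "path_chain ds' = path_chain ds"
    using reduce_path[OF assms(2)] .
  have "(THE ds. path_from src tgt u ds v \<and> reduced ds) = ds'"
    using ds' reduced_path_unique[OF tree] by blast
  with ds' show ?thesis by (simp add: geod_chain_def)
qed

lemma finite_chain_supp_path_chain: "finite (chain_supp (path_chain ds))"
proof (rule finite_subset)
  show "chain_supp (path_chain ds) \<subseteq> fst ` set ds"
    by (induction ds) (auto simp: chain_supp_def split: if_splits)
qed simp

lemma path_chain_eq_0: "(\<And>d. d \<in> set ds \<Longrightarrow> fst d \<noteq> e) \<Longrightarrow> path_chain ds e = 0"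
  by (induction ds) auto

lemma normsq_eq_sum:
  "finite S \<Longrightarrow> chain_supp x \<subseteq> S \<Longrightarrow> normsq x = (\<Sum>e\<in>S. (x e)^2)"
  unfolding normsq_def by (rule sum.mono_neutral_left) (auto simp: chain_supp_def)

lemma Af_eq_sum:
  "finite S \<Longrightarrow> chain_supp x \<subseteq> S \<Longrightarrow> Af fe x e' = (\<Sum>e\<in>S. x e * path_chain (fe e) e')"
  unfolding Af_def by (rule sum.mono_neutral_left) (auto simp: chain_supp_def)

lemma Af_sum:
  assumes "finite J" "\<And>j. j \<in> J \<Longrightarrow> finite (chain_supp (y j))"
  shows "Af fe (\<lambda>e. \<Sum>j\<in>J. c j * y j e) e' = (\<Sum>j\<in>J. c j * Af fe (y j) e')"
proof -
  define S where "S = (\<Union>j\<in>J. chain_supp (y j))"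
  have S: "finite S" "\<And>j. j \<in> J \<Longrightarrow> chain_supp (y j) \<subseteq> S"
    using assms by (auto simp: S_def)
  have "chain_supp (\<lambda>e. \<Sum>j\<in>J. c j * y j e) \<subseteq> S"
    by (auto simp: chain_supp_def S_def intro: ccontr)
  then have "Af fe (\<lambda>e. \<Sum>j\<in>J. c j * y j e) e'
      = (\<Sum>e\<in>S. (\<Sum>j\<in>J. c j * y j e) * path_chain (fe e) e')"
    by (rule Af_eq_sum[OF S(1)])
  also have "\<dots> = (\<Sum>j\<in>J. c j * (\<Sum>e\<in>S. y j e * path_chain (fe e) e'))"
    by (simp add: sum_distrib_right sum_distrib_left sum.swap[of _ S] mult.assoc)
  also have "\<dots> = (\<Sum>j\<in>J. c j * Af fe (y j) e')"
    using Af_eq_sum[OF S] by simp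
  finally show ?thesis .
qed

lemma Af_add:
  assumes "finite (chain_supp x)" "finite (chain_supp y)"
  shows "Af fe (\<lambda>e. x e + y e) e' = Af fe x e' + Af fe y e'"
  using Af_sum[of "{True, False}" "\<lambda>b. if b then x else y" fe "\<lambda>_. 1"] assms by simp

definition edge_image :: "('e \<Rightarrow> ('e \<times> bool) list) \<Rightarrow> 'e \<times> bool \<Rightarrow> ('e \<times> bool) list" where
  "edge_image fe d = (if snd d then fe (fst d) else rev_path (fe (fst d)))"

lemma Af_path_chain: "Af fe (path_chain ds) = path_chain (concat (map (edge_image fe) ds))"
proof (induction ds)
  case Nil
  then show ?case by (auto simp: Af_def chain_supp_def fun_eq_iff)
next
  case (Cons d ds)
  define s where "s = (if snd d then 1 else -1 :: rat)"
  define delta where "delta = (\<lambda>e. s * (if e = fst d then 1 else 0))"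
  have "finite (chain_supp delta)"
    by (rule finite_subset[of _ "{fst d}"]) (auto simp: chain_supp_def delta_def)
  moreover have "path_chain (d # ds) = (\<lambda>e. delta e + path_chain ds e)"
    by (auto simp: fun_eq_iff delta_def s_def)
  moreover have "Af fe delta e' = s * path_chain (fe (fst d)) e'" for e'
    by (subst Af_eq_sum[of "{fst d}"]) (auto simp: chain_supp_def delta_def)
  ultimately show ?case
    using Cons.IH
    by (auto simp: fun_eq_iff Af_add finite_chain_supp_path_chain path_chain_append
        edge_image_def path_chain_rev_path s_def)
qed

lemma path_from_edge_images:
  assumes "\<And>e. path_from src tgt (fv (src e)) (fe e) (fv (tgt e))"
    and "path_from src tgt u ds v"
  shows "path_from src tgt (fv u) (concat (map (edge_image fe) ds)) (fv v)"
  using assms(2)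
proof (induction ds arbitrary: u)
  case (Cons d ds)
  have "path_from src tgt (fv u) (edge_image fe d) (fv (oend src tgt d))"
    using Cons.prems assms(1)[of "fst d"] path_from_rev_path[OF assms(1)[of "fst d"]]
    by (auto simp: edge_image_def ostart_def oend_def)
  with Cons show ?case by (auto simp: path_from_append)
qed simp

lemma Af_geod_chain:
  assumes tree: "is_tree src tgt"
    and "\<And>e. path_from src tgt (fv (src e)) (fe e) (fv (tgt e))"
  shows "Af fe (geod_chain src tgt u v) = geod_chain src tgt (fv u) (fv v)"
proof -
  obtain ds where ds: "path_from src tgt u ds v"
    using tree unfolding is_tree_def by blast
  show ?thesis
    using geod_chain_eq_path_chain[OF tree ds] Af_path_chain
      geod_chain_eq_path_chain[OF tree path_from_edge_images[OF assms(2) ds]]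
    by simp
qed

lemma projH_Af_projH:
  assumes "\<And>e d. e \<in> He \<Longrightarrow> d \<in> set (fe e) \<Longrightarrow> fst d \<in> He"
    and fin: "finite (chain_supp c)"
  shows "projH He (Af fe (projH He c)) = projH He (Af fe c)"
proof
  fix e'
  define cH where "cH = (\<lambda>e. if e \<in> He then c e else 0)"
  have "finite (chain_supp (projH He c))" "finite (chain_supp cH)"
    by (auto intro: finite_subset[OF _ fin] simp: chain_supp_def projH_def cH_def)
  moreover have "c = (\<lambda>e. projH He c e + cH e)"
    by (auto simp: fun_eq_iff projH_def cH_def)
  moreover have "Af fe cH e' = 0" if "e' \<notin> He"
    unfolding Af_def
    using assms(1) that by (auto simp: chain_supp_def cH_def intro!: sum.neutral path_chain_eq_0)
  ultimately show "projH He (Af fe (projH He c)) e' = projH He (Af fe c) e'"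
    by (metis Af_add add.right_neutral projH_def)
qed

locale deck_transformations =
  fixes G :: "('g, 'z) monoid_scheme" (structure)
    and act :: "'g \<Rightarrow> 'v \<Rightarrow> 'v" and acte :: "'g \<Rightarrow> 'e \<Rightarrow> 'e"
    and src tgt :: "'e \<Rightarrow> 'v"
  assumes deck: "deck_action G act acte src tgt"
begin

sublocale group G
  using deck by (simp add: deck_action_def)

lemma acte_mult: "g \<in> carrier G \<Longrightarrow> h \<in> carrier G \<Longrightarrow> acte (g \<otimes> h) e = acte g (acte h e)"
  using deck by (simp add: deck_action_def)

lemma acte_one [simp]: "acte \<one> e = e"
  using deck by (simp add: deck_action_def)

lemma acte_inv_acte [simp]: "g \<in> carrier G \<Longrightarrow> acte (inv g) (acte g e) = e"
  by (simp flip: acte_mult)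

lemma acte_acte_inv [simp]: "g \<in> carrier G \<Longrightarrow> acte g (acte (inv g) e) = e"
  by (simp flip: acte_mult)

lemma inj_acte: "g \<in> carrier G \<Longrightarrow> inj (acte g)"
  by (metis acte_inv_acte injI)

lemma acte_fixed_imp_one:
  assumes "g \<in> carrier G" "acte g e = e"
  shows "g = \<one>"
proof -
  have "act g (src e) = src e"
    using deck assms unfolding deck_action_def by (metis (no_types))
  with deck assms(1) show ?thesis
    unfolding deck_action_def by blast
qed

lemma acte_eq_iff:
  assumes "a \<in> carrier G" "b \<in> carrier G"
  shows "acte a e = acte b e \<longleftrightarrow> a = b"
proof
  assume "acte a e = acte b e"
  then have "inv b \<otimes> a = \<one>"
    using assms by (intro acte_fixed_imp_one[where e = e]) (simp_all add: acte_mult)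
  with assms show "a = b" by (simp add: inv_solve_left')
qed simp

lemma chain_act_acte [simp]: "g \<in> carrier G \<Longrightarrow> chain_act G acte g x (acte g e) = x e"
  by (simp add: chain_act_def)

lemma chain_supp_chain_act:
  "g \<in> carrier G \<Longrightarrow> chain_supp (chain_act G acte g x) = acte g ` chain_supp x"
  by (auto simp: chain_supp_def chain_act_def image_iff) (metis acte_acte_inv)

lemma normsq_chain_act: "g \<in> carrier G \<Longrightarrow> normsq (chain_act G acte g x) = normsq x"
  by (simp add: normsq_def chain_supp_chain_act sum.reindex inj_on_subset[OF inj_acte])

lemma path_chain_map_acte:
  "g \<in> carrier G \<Longrightarrow>
     path_chain (map (\<lambda>d. (acte g (fst d), snd d)) ds) e = chain_act G acte g (path_chain ds) e"
  by (induction ds) (auto simp: chain_act_def)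

lemma Af_chain_act:
  assumes "lifted_map G act acte src tgt Phi fv fe" "g \<in> carrier G" "finite (chain_supp x)"
  shows "Af fe (chain_act G acte g x) = chain_act G acte (Phi g) (Af fe x)"
proof
  fix e'
  have fe: "fe (acte g e) = map (\<lambda>d. (acte (Phi g) (fst d), snd d)) (fe e)" for e
    using assms(1,2) by (simp add: lifted_map_def)
  have Phi_g: "Phi g \<in> carrier G"
    using assms(1,2) by (auto simp: lifted_map_def iso_def hom_def)
  have "Af fe (chain_act G acte g x) e'
      = (\<Sum>e\<in>acte g ` chain_supp x. chain_act G acte g x e * path_chain (fe e) e')"
    by (simp add: Af_def chain_supp_chain_act assms(2))
  also have "\<dots> = (\<Sum>e\<in>chain_supp x. x e * chain_act G acte (Phi g) (path_chain (fe e)) e')"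
    by (simp add: sum.reindex inj_on_subset[OF inj_acte] assms(2) fe path_chain_map_acte Phi_g)
  also have "\<dots> = chain_act G acte (Phi g) (Af fe x) e'"
    by (simp add: chain_act_def Af_def)
  finally show "Af fe (chain_act G acte g x) e' = chain_act G acte (Phi g) (Af fe x) e'" .
qed

lemma projH_chain_act:
  assumes "\<And>g e. g \<in> carrier G \<Longrightarrow> e \<in> He \<Longrightarrow> acte g e \<in> He" "g \<in> carrier G"
  shows "projH He (chain_act G acte g x) = chain_act G acte g (projH He x)"
proof -
  have "acte (inv g) e \<in> He \<longleftrightarrow> e \<in> He" for e
    using assms acte_acte_inv[OF assms(2), of e] by (metis inv_closed)
  then show ?thesis by (auto simp: fun_eq_iff projH_def chain_act_def)
qed

lemma chain_supp_translates_subset: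
  fixes n :: nat
  assumes "\<And>j. j < n \<Longrightarrow> h j \<in> carrier G"
  shows "chain_supp (\<lambda>e. \<Sum>j<n. q j * chain_act G acte (h j) x e)
           \<subseteq> (\<Union>j<n. acte (h j) ` chain_supp x)"
proof
  fix e
  assume "e \<in> chain_supp (\<lambda>e. \<Sum>j<n. q j * chain_act G acte (h j) x e)"
  then have "(\<Sum>j<n. q j * chain_act G acte (h j) x e) \<noteq> 0"
    by (simp add: chain_supp_def)
  then obtain j where j: "j < n" "q j * chain_act G acte (h j) x e \<noteq> 0"
    by (meson lessThan_iff sum.not_neutral_contains_not_neutral)
  then have "e \<in> chain_supp (chain_act G acte (h j) x)"
    by (simp add: chain_supp_def)
  with j(1) assms show "e \<in> (\<Union>j<n. acte (h j) ` chain_supp x)"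
    by (auto simp: chain_supp_chain_act)
qed

lemma translates_at_isolated_edge:
  fixes n :: nat
  assumes h: "\<And>j. j < n \<Longrightarrow> h j \<in> carrier G" "inj_on h {..<n}"
    and isolated: "\<And>g. g \<in> carrier G \<Longrightarrow> g \<noteq> \<one> \<Longrightarrow> x (acte g e0) = 0"
    and "j < n"
  shows "(\<Sum>i<n. q i * chain_act G acte (h i) x (acte (h j) e0)) = q j * x e0"
proof -
  have "chain_act G acte (h i) x (acte (h j) e0) = (if i = j then x e0 else 0)" if "i < n" for i
  proof -
    have "chain_act G acte (h i) x (acte (h j) e0) = x (acte (inv h i \<otimes> h j) e0)"
      using h(1) \<open>i < n\<close> \<open>j < n\<close> by (simp add: chain_act_def acte_mult)
    moreover have "inv h i \<otimes> h j = \<one> \<longleftrightarrow> i = j"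
      using h \<open>i < n\<close> \<open>j < n\<close> by (auto simp: inv_solve_left' inj_on_def)
    ultimately show ?thesis
      using isolated h(1) \<open>i < n\<close> \<open>j < n\<close> by auto
  qed
  then have "(\<Sum>i<n. q i * chain_act G acte (h i) x (acte (h j) e0))
      = (\<Sum>i<n. if i = j then q j * x e0 else 0)"
    by (intro sum.cong) auto
  with \<open>j < n\<close> show ?thesis by simp
qed

lemma normsq_translates_ge:
  fixes n :: nat
  assumes h: "\<And>j. j < n \<Longrightarrow> h j \<in> carrier G" "inj_on h {..<n}"
    and isolated: "\<And>g. g \<in> carrier G \<Longrightarrow> g \<noteq> \<one> \<Longrightarrow> x (acte g e0) = 0"
    and x_e0: "(x e0)^2 = 1" and fin: "finite (chain_supp x)"
  shows "(\<Sum>j<n. (q j)^2) \<le> normsq (\<lambda>e. \<Sum>j<n. q j * chain_act G acte (h j) x e)"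
    (is "_ \<le> normsq ?z")
proof -
  define T where "T = (\<Union>j<n. acte (h j) ` chain_supp x)"
  have "finite T" using fin by (auto simp: T_def)
  have supp: "chain_supp (\<lambda>e. \<Sum>j<n. q j * chain_act G acte (h j) x e) \<subseteq> T"
    unfolding T_def by (rule chain_supp_translates_subset) (simp add: h(1))
  have e0: "e0 \<in> chain_supp x" using x_e0 by (auto simp: chain_supp_def)
  have inj: "inj_on (\<lambda>j. acte (h j) e0) {..<n}"
    using h by (auto simp: inj_on_def acte_eq_iff)
  have "(\<Sum>j<n. (q j)^2) = (\<Sum>j<n. (?z (acte (h j) e0))^2)"
    using translates_at_isolated_edge[of n h x e0, OF h isolated] x_e0
    by (simp add: power_mult_distrib)
  also have "\<dots> = (\<Sum>e\<in>(\<lambda>j. acte (h j) e0) ` {..<n}. (?z e)^2)"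
    by (simp add: sum.reindex[OF inj])
  also have "\<dots> \<le> (\<Sum>e\<in>T. (?z e)^2)"
    using \<open>finite T\<close> e0 by (intro sum_mono2) (auto simp: T_def)
  also have "\<dots> = normsq ?z"
    using \<open>finite T\<close> supp by (rule normsq_eq_sum[symmetric])
  finally show ?thesis .
qed

text \<open>At most |supp x| of the translates h j x meet a given edge, whence Cauchy-Schwarz.\<close>
lemma sq_translates_le:
  fixes n :: nat
  assumes h: "\<And>j. j < n \<Longrightarrow> h j \<in> carrier G" "inj_on h {..<n}" and fin: "finite (chain_supp x)"
  shows "(\<Sum>j<n. q j * chain_act G acte (h j) x e)^2
           \<le> of_nat (card (chain_supp x)) * (\<Sum>j<n. (q j * chain_act G acte (h j) x e)^2)"
proof -
  define a where "a = (\<lambda>j. q j * chain_act G acte (h j) x e)"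
  define J where "J = {j \<in> {..<n}. acte (inv h j) e \<in> chain_supp x}"
  have "card J \<le> card (chain_supp x)"
  proof (rule card_inj_on_le[OF _ _ fin])
    show "inj_on (\<lambda>j. acte (inv h j) e) J"
    proof (rule inj_onI)
      fix i j
      assume ij: "i \<in> J" "j \<in> J" and "acte (inv h i) e = acte (inv h j) e"
      then have "inv h i = inv h j"
        using h(1) by (simp add: J_def acte_eq_iff)
      then have "h i = h j"
        using h(1) ij by (auto simp: J_def intro: inj_onD[OF inv_inj])
      with h(2) ij show "i = j"
        by (auto simp: J_def dest: inj_onD)
    qed
  qed (auto simp: J_def)
  have "(\<Sum>j<n. a j) = (\<Sum>j\<in>J. a j)"
    by (rule sum.mono_neutral_right) (auto simp: J_def a_def chain_supp_def chain_act_def)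
  then have "(\<Sum>j<n. a j)^2 \<le> (\<Sum>j\<in>J. (a j)^2) * of_nat (card J)"
    using Cauchy_Schwarz_ineq_sum[of a "\<lambda>_. 1" J] by simp
  also have "\<dots> \<le> (\<Sum>j<n. (a j)^2) * of_nat (card (chain_supp x))"
    using \<open>card J \<le> card (chain_supp x)\<close>
    by (intro mult_mono sum_mono2 sum_nonneg) (auto simp: J_def)
  finally show ?thesis by (simp add: a_def mult.commute)
qed

lemma normsq_translates_le:
  fixes n :: nat
  assumes h: "\<And>j. j < n \<Longrightarrow> h j \<in> carrier G" "inj_on h {..<n}" and fin: "finite (chain_supp x)"
  shows "normsq (\<lambda>e. \<Sum>j<n. q j * chain_act G acte (h j) x e)
           \<le> of_nat (card (chain_supp x)) * normsq x * (\<Sum>j<n. (q j)^2)"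
proof -
  define N where "N = (of_nat (card (chain_supp x)) :: rat)"
  define T where "T = (\<Union>j<n. acte (h j) ` chain_supp x)"
  have "finite T" using fin by (auto simp: T_def)
  have supp: "chain_supp (\<lambda>e. \<Sum>j<n. q j * chain_act G acte (h j) x e) \<subseteq> T"
    unfolding T_def by (rule chain_supp_translates_subset) (simp add: h(1))
  have sq: "(\<Sum>e\<in>T. (chain_act G acte (h j) x e)^2) = normsq x" if "j < n" for j
  proof -
    have "chain_supp (chain_act G acte (h j) x) \<subseteq> T"
      using that h(1)[OF that] by (auto simp: T_def chain_supp_chain_act)
    with \<open>finite T\<close> h(1)[OF that] show ?thesis
      by (simp add: normsq_eq_sum[symmetric] normsq_chain_act)
  qed
  have "normsq (\<lambda>e. \<Sum>j<n. q j * chain_act G acte (h j) x e)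
      = (\<Sum>e\<in>T. (\<Sum>j<n. q j * chain_act G acte (h j) x e)^2)"
    using \<open>finite T\<close> supp by (rule normsq_eq_sum)
  also have "\<dots> \<le> (\<Sum>e\<in>T. N * (\<Sum>j<n. (q j * chain_act G acte (h j) x e)^2))"
    unfolding N_def by (intro sum_mono sq_translates_le[of n h x, OF h fin])
  also have "\<dots> = N * (\<Sum>j<n. (q j)^2 * (\<Sum>e\<in>T. (chain_act G acte (h j) x e)^2))"
    by (simp add: sum_distrib_left sum.swap[of _ T] power_mult_distrib)
  also have "\<dots> = N * normsq x * (\<Sum>j<n. (q j)^2)"
    by (simp add: sq sum_distrib_left mult_ac)
  finally show ?thesis by (simp add: N_def)
qed

lemma AfH_chain_act:
  assumes lm: "lifted_map G act acte src tgt Phi fv fe"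
    and He: "\<And>g e. g \<in> carrier G \<Longrightarrow> e \<in> He \<Longrightarrow> acte g e \<in> He"
    and fin: "finite (chain_supp x)" and fixed: "AfH He fe x = x" and g: "g \<in> carrier G"
  shows "AfH He fe (chain_act G acte g x) = chain_act G acte (Phi g) x"
proof -
  have "Phi g \<in> carrier G"
    using lm g by (auto simp: lifted_map_def iso_def hom_def)
  then show ?thesis
    using fixed by (simp add: AfH_def Af_chain_act[OF lm g fin] projH_chain_act[OF He])
qed

lemma AfH_translates:
  fixes n :: nat
  assumes lm: "lifted_map G act acte src tgt Phi fv fe"
    and He: "\<And>g e. g \<in> carrier G \<Longrightarrow> e \<in> He \<Longrightarrow> acte g e \<in> He"
    and fin: "finite (chain_supp x)" and fixed: "AfH He fe x = x"
    and h: "\<And>j. j < n \<Longrightarrow> h j \<in> carrier G"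
  shows "AfH He fe (\<lambda>e. \<Sum>j<n. c j * chain_act G acte (h j) x e)
           = (\<lambda>e. \<Sum>j<n. c j * chain_act G acte (Phi (h j)) x e)"
proof
  fix e'
  have "Af fe (\<lambda>e. \<Sum>j<n. c j * chain_act G acte (h j) x e) e'
      = (\<Sum>j<n. c j * Af fe (chain_act G acte (h j) x) e')"
    using h fin by (intro Af_sum) (simp_all add: chain_supp_chain_act)
  moreover have "projH He (Af fe (chain_act G acte (h j) x)) e'
      = chain_act G acte (Phi (h j)) x e'" if "j < n" for j
    using AfH_chain_act[OF lm He fin fixed h[OF that]] by (simp add: AfH_def)
  ultimately show "AfH He fe (\<lambda>e. \<Sum>j<n. c j * chain_act G acte (h j) x e) e'
      = (\<Sum>j<n. c j * chain_act G acte (Phi (h j)) x e')"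
    by (auto simp: AfH_def projH_def)
qed

lemma AfH_pow_translates:
  fixes n :: nat
  assumes lm: "lifted_map G act acte src tgt Phi fv fe"
    and He: "\<And>g e. g \<in> carrier G \<Longrightarrow> e \<in> He \<Longrightarrow> acte g e \<in> He"
    and fin: "finite (chain_supp x)" and fixed: "AfH He fe x = x"
    and h: "\<And>j. j < n \<Longrightarrow> h j \<in> carrier G"
  shows "(AfH He fe ^^ k) (\<lambda>e. \<Sum>j<n. c j * chain_act G acte (h j) x e)
           = (\<lambda>e. \<Sum>j<n. c j * chain_act G acte ((Phi ^^ k) (h j)) x e)"
proof (induction k)
  case (Suc k)
  have "bij_betw (Phi ^^ k) (carrier G) (carrier G)"
    using lm by (intro bij_betw_funpow) (simp add: lifted_map_def iso_def)
  then show ?case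
    using Suc h by (simp add: AfH_translates[OF lm He fin fixed] bij_betw_apply)
qed simp

lemma normsq_AfH_pow_translates_bounds:
  fixes gs :: "'g list" and qs :: "rat list" and k :: nat
  assumes lm: "lifted_map G act acte src tgt Phi fv fe"
    and He: "\<And>g e. g \<in> carrier G \<Longrightarrow> e \<in> He \<Longrightarrow> acte g e \<in> He"
    and fin: "finite (chain_supp x)" and fixed: "AfH He fe x = x"
    and isolated: "\<And>g. g \<in> carrier G \<Longrightarrow> g \<noteq> \<one> \<Longrightarrow> x (acte g e0) = 0"
    and x_e0: "(x e0)^2 = 1"
    and gs: "distinct gs" "set gs \<subseteq> carrier G" "length qs = length gs"
  defines "y \<equiv> (AfH He fe ^^ k) (\<lambda>e. \<Sum>j<length gs. qs ! j * chain_act G acte (gs ! j) x e)"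
  shows "(\<Sum>j<length qs. (qs ! j)^2) \<le> normsq y"
    and "normsq y \<le> of_nat (card (chain_supp x)) * normsq x * (\<Sum>j<length qs. (qs ! j)^2)"
proof -
  define h where "h = (\<lambda>j. (Phi ^^ k) (gs ! j))"
  have bij: "bij_betw (Phi ^^ k) (carrier G) (carrier G)"
    using lm by (intro bij_betw_funpow) (simp add: lifted_map_def iso_def)
  have gs_carrier: "gs ! j \<in> carrier G" if "j < length gs" for j
    using gs(2) nth_mem[OF that] by blast
  have h_carrier: "\<And>j. j < length gs \<Longrightarrow> h j \<in> carrier G"
    using bij_betw_apply[OF bij] gs_carrier by (simp add: h_def)
  have "inj_on (nth gs) {..<length gs}"
    using gs(1) by (simp add: inj_on_nth)
  moreover have "inj_on (Phi ^^ k) (nth gs ` {..<length gs})"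
    using gs_carrier by (blast intro: inj_on_subset[OF bij_betw_imp_inj_on[OF bij]])
  ultimately have "inj_on h {..<length gs}"
    unfolding h_def using comp_inj_on[of "nth gs"] by (simp add: comp_def)
  note h = h_carrier this
  have "y = (\<lambda>e. \<Sum>j<length gs. qs ! j * chain_act G acte (h j) x e)"
    unfolding y_def h_def using gs_carrier by (intro AfH_pow_translates[OF lm He fin fixed])
  then show "(\<Sum>j<length qs. (qs ! j)^2) \<le> normsq y"
    and "normsq y \<le> of_nat (card (chain_supp x)) * normsq x * (\<Sum>j<length qs. (qs ! j)^2)"
    using normsq_translates_ge[OF h isolated x_e0 fin] normsq_translates_le[OF h fin] gs(3)
    by simp_all
qed

end

lemma finite_chain_supp_projH_geod_chain:
  assumes "is_tree src tgt"
  shows "finite (chain_supp (projH He (geod_chain src tgt u v)))"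
proof -
  obtain ds where "path_from src tgt u ds v"
    using assms unfolding is_tree_def by blast
  then have "finite (chain_supp (geod_chain src tgt u v))"
    using assms by (simp add: geod_chain_eq_path_chain finite_chain_supp_path_chain)
  then show ?thesis
    by (rule finite_subset[rotated]) (auto simp: chain_supp_def projH_def)
qed

lemma AfH_projH_geod_chain:
  assumes tree: "is_tree src tgt"
    and paths: "\<And>e. path_from src tgt (fv (src e)) (fe e) (fv (tgt e))"
    and He: "\<And>e d. e \<in> He \<Longrightarrow> d \<in> set (fe e) \<Longrightarrow> fst d \<in> He"
    and "fv u = u" "fv v = v"
  shows "AfH He fe (projH He (geod_chain src tgt u v)) = projH He (geod_chain src tgt u v)"
proof -
  obtain ds where "path_from src tgt u ds v"
    using tree unfolding is_tree_def by blast
  then have "finite (chain_supp (geod_chain src tgt u v))"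
    using tree by (simp add: geod_chain_eq_path_chain finite_chain_supp_path_chain)
  then show ?thesis
    using assms by (simp add: AfH_def projH_Af_projH[OF He] Af_geod_chain[OF tree paths])
qed

lemma nongeometric_nielsenE:
  assumes tree: "is_tree src tgt"
    and lm: "lifted_map G act acte src tgt Phi fv fe"
    and Hinv: "invariant_subgraph G act acte src tgt fv fe Hv He"
    and "nongeometric_nielsen G acte src tgt fv He rho"
  obtains e0 where "finite (chain_supp rho)" "AfH He fe rho = rho" "(rho e0)^2 = 1"
    "\<And>g. g \<in> carrier G \<Longrightarrow> g \<noteq> \<one>\<^bsub>G\<^esub> \<Longrightarrow> rho (acte g e0) = 0"
proof -
  obtain u v e0 where rho: "rho = projH He (geod_chain src tgt u v)" "fv u = u" "fv v = v"
    and "(rho e0)^2 = 1" "\<And>g. g \<in> carrier G \<Longrightarrow> g \<noteq> \<one>\<^bsub>G\<^esub> \<Longrightarrow> rho (acte g e0) = 0"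
    using assms(4) unfolding nongeometric_nielsen_def by (metis power2_minus power_one)
  moreover have "finite (chain_supp rho)"
    using finite_chain_supp_projH_geod_chain[OF tree] rho(1) by simp
  moreover have "AfH He fe rho = rho"
    unfolding rho(1)
    by (rule AfH_projH_geod_chain[where fv = fv])
       (use tree lm Hinv rho(2,3) in \<open>auto simp: lifted_map_def invariant_subgraph_def\<close>)
  ultimately show ?thesis using that by blast
qed

theorem lemma5p2:
  fixes G :: "('g, 'z) monoid_scheme"
    and act :: "'g \<Rightarrow> 'v \<Rightarrow> 'v" and acte :: "'g \<Rightarrow> 'e \<Rightarrow> 'e"
    and src tgt :: "'e \<Rightarrow> 'v" and Phi :: "'g \<Rightarrow> 'g"
    and fv :: "'v \<Rightarrow> 'v" and fe :: "'e \<Rightarrow> ('e \<times> bool) list"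
    and Hv :: "'v set" and He :: "'e set" and rho :: "'e \<Rightarrow> rat"
  assumes "is_tree src tgt"
    and "deck_action G act acte src tgt"
    and "lifted_map G act acte src tgt Phi fv fe"
    and "invariant_subgraph G act acte src tgt fv fe Hv He"
    and "nongeometric_nielsen G acte src tgt fv He rho"
  shows "\<exists>B::rat. B \<ge> 1 \<and>
    (\<forall>(gs :: 'g list) (qs :: rat list) (k :: nat).
       distinct gs \<and> set gs \<subseteq> carrier G \<and> length qs = length gs \<longrightarrow>
       (let x = (\<lambda>e. \<Sum>j<length gs. qs ! j * chain_act G acte (gs ! j) rho e)
        in (\<Sum>j<length qs. (qs ! j)^2) \<le> normsq ((AfH He fe ^^ k) x) \<and>
           normsq ((AfH He fe ^^ k) x) \<le> B * (\<Sum>j<length qs. (qs ! j)^2)))"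
proof -
  interpret deck_transformations G act acte src tgt
    by unfold_locales (fact assms(2))
  have He: "\<And>g e. g \<in> carrier G \<Longrightarrow> e \<in> He \<Longrightarrow> acte g e \<in> He"
    using assms(4) by (simp add: invariant_subgraph_def)
  obtain e0 where rho: "finite (chain_supp rho)" "AfH He fe rho = rho" "(rho e0)^2 = 1"
    and isolated: "\<And>g. g \<in> carrier G \<Longrightarrow> g \<noteq> \<one>\<^bsub>G\<^esub> \<Longrightarrow> rho (acte g e0) = 0"
    using nongeometric_nielsenE[OF assms(1,3,4,5)] by blast
  note bounds = normsq_AfH_pow_translates_bounds[OF assms(3) He rho(1,2) isolated rho(3)]
  define B where "B = of_nat (card (chain_supp rho)) * normsq rho"
  \<comment> \<open>the bounds for the single term 1 * rho, with k = 0\<close>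
  have "1 \<le> B"
    using bounds[of "[\<one>\<^bsub>G\<^esub>]" "[1]" 0] by (simp add: B_def)
  then show ?thesis
    using bounds by (auto simp: B_def Let_def)
qed

end
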